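(* Let $K$ be a simplicial complex in $\mathbb{R}^N$ and let $U\subset\mathbb{R}^N$ be a convex subset. Then the subcomplex $K\cap U$ is nice.
   Context: A simplicial complex is a locally finite set of linear simplices in $\mathbb{R}^N$ closed under faces with pairwise intersections common faces. $K\cap U$ is the maximal subcomplex of $K$ whose simplices are all contained in $U$. For a subcomplex $K'$ and $\Delta\in K$, $\Delta\cap K'$ denotes the set of simplices of $K'$ that are faces of $\Delta$. Two simplices are adjacent if they share a face; $\operatorname{star}(K')$ is the set of simplices adjacent to some simplex of $K'$ with their faces. $K'$ is nice if for every $\Delta\in\operatorname{star}(K')$, $\Delta\cap K'$ is a single face of $\Delta$ (together with its faces). *)

theory Defs
  imports "HOL-Analysis.Analysis"
begin

definition is_simplex :: "(real^'n) set \<Rightarrow> bool" where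
  "is_simplex S \<longleftrightarrow> (\<exists>k::int. k \<ge> 0 \<and> k simplex S)"

definition simplex_face :: "(real^'n) set \<Rightarrow> (real^'n) set \<Rightarrow> bool" where
  "simplex_face F S \<longleftrightarrow> F face_of S \<and> F \<noteq> {}"

definition locally_finite_family :: "(real^'n) set set \<Rightarrow> bool" where
  "locally_finite_family K \<longleftrightarrow>
     (\<forall>x. \<exists>e>0. finite {D\<in>K. D \<inter> ball x e \<noteq> {}})"

definition lin_simplicial_complex :: "(real^'n) set set \<Rightarrow> bool" where
  "lin_simplicial_complex K \<longleftrightarrow>
     (\<forall>D\<in>K. is_simplex D) \<and>
     locally_finite_family K \<and>
     (\<forall>D\<in>K. \<forall>F. simplex_face F D \<longrightarrow> F \<in> K) \<and>
     (\<forall>D\<in>K. \<forall>D'\<in>K. (D \<inter> D') face_of D \<and> (D \<inter> D') face_of D')"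

definition subcomplex :: "(real^'n) set set \<Rightarrow> (real^'n) set set \<Rightarrow> bool" where
  "subcomplex K' K \<longleftrightarrow> K' \<subseteq> K \<and> lin_simplicial_complex K'"

text \<open>K \<inter> U: the maximal subcomplex whose simplices are all contained in U.\<close>
definition complex_restrict :: "(real^'n) set set \<Rightarrow> (real^'n) set \<Rightarrow> (real^'n) set set" where
  "complex_restrict K U = {D\<in>K. D \<subseteq> U}"

text \<open>For a simplex D, D \<inter> K' is the set of simplices of K' that are faces of D.\<close>
definition simplex_meet :: "(real^'n) set \<Rightarrow> (real^'n) set set \<Rightarrow> (real^'n) set set" where
  "simplex_meet D K' = {G\<in>K'. simplex_face G D}"

definition adjacent :: "(real^'n) set \<Rightarrow> (real^'n) set \<Rightarrow> bool" where
  "adjacent D D' \<longleftrightarrow> (\<exists>F. simplex_face F D \<and> simplex_face F D')"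

definition complex_star :: "(real^'n) set set \<Rightarrow> (real^'n) set set \<Rightarrow> (real^'n) set set" where
  "complex_star K K' =
     {F. \<exists>D\<in>K. (\<exists>S\<in>K'. adjacent D S) \<and> (F = D \<or> simplex_face F D)}"

text \<open>K' is nice in K: for every D in star(K'), D \<inter> K' consists of a single face F of D
  together with its faces (F may be empty, i.e. D \<inter> K' may be empty).\<close>
definition nice :: "(real^'n) set set \<Rightarrow> (real^'n) set set \<Rightarrow> bool" where
  "nice K K' \<longleftrightarrow>
     (\<forall>D\<in>complex_star K K'. \<exists>F. F face_of D \<and>
        simplex_meet D K' = {G. simplex_face G F})"

end

theory Submission
  imports Defs
begin

text \<open>Write a simplex D of K as the convex hull of its affinely independent vertex set C.
  The faces of D are the hulls of subsets of C, and such a face lies in the convex set U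
  exactly when its vertices do; hence the faces of D inside U are precisely the faces of
  the single face convex hull (C \<inter> U).\<close>

lemma subcomplex_complex_restrict:
  assumes K: "lin_simplicial_complex K"
  shows "subcomplex (complex_restrict K U) K"
proof -
  have sub: "complex_restrict K U \<subseteq> K"
    by (auto simp: complex_restrict_def)
  have "locally_finite_family (complex_restrict K U)"
    unfolding locally_finite_family_def
  proof
    fix x
    obtain e where "e > 0" "finite {D\<in>K. D \<inter> ball x e \<noteq> {}}"
      using K unfolding lin_simplicial_complex_def locally_finite_family_def by blast
    moreover have "{D\<in>complex_restrict K U. D \<inter> ball x e \<noteq> {}} \<subseteq> {D\<in>K. D \<inter> ball x e \<noteq> {}}"
      using sub by blast
    ultimately show "\<exists>e>0. finite {D\<in>complex_restrict K U. D \<inter> ball x e \<noteq> {}}"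
      using finite_subset by blast
  qed
  moreover have "F \<in> complex_restrict K U"
    if D: "D \<in> complex_restrict K U" and F: "simplex_face F D" for D F
  proof -
    have "F \<in> K"
      using K D F sub unfolding lin_simplicial_complex_def by blast
    moreover have "F \<subseteq> D"
      using F face_of_imp_subset simplex_face_def by blast
    ultimately show ?thesis
      using D by (auto simp: complex_restrict_def)
  qed
  moreover have "\<forall>D\<in>complex_restrict K U. is_simplex D"
    "\<forall>D\<in>complex_restrict K U. \<forall>D'\<in>complex_restrict K U. (D \<inter> D') face_of D \<and> (D \<inter> D') face_of D'"
    using K sub unfolding lin_simplicial_complex_def by blast+
  ultimately show ?thesis
    using sub unfolding subcomplex_def lin_simplicial_complex_def by blast
qed

lemma complex_star_subset:
  assumes "lin_simplicial_complex K"
  shows "complex_star K K' \<subseteq> K"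
  using assms unfolding complex_star_def lin_simplicial_complex_def by blast

lemma simplex_meet_complex_restrict:
  assumes "lin_simplicial_complex K" "D \<in> K"
  shows "simplex_meet D (complex_restrict K U) = {G. simplex_face G D \<and> G \<subseteq> U}"
  using assms unfolding simplex_meet_def complex_restrict_def lin_simplicial_complex_def
  by blast

lemma face_of_simplex_subset_convex_iff:
  fixes C U :: "'a::euclidean_space set"
  assumes indep: "\<not> affine_dependent C" and "convex U"
  shows "G face_of convex hull C \<and> G \<subseteq> U \<longleftrightarrow> G face_of convex hull (C \<inter> U)"
proof -
  have hull_face: "convex hull (C \<inter> U) face_of convex hull C"
    using face_of_convex_hull_affine_independent[OF indep] by blast
  show ?thesis
  proof
    assume "G face_of convex hull C \<and> G \<subseteq> U"
    then have G: "G face_of convex hull C" "G \<subseteq> U" by auto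
    obtain c where c: "c \<subseteq> C" "G = convex hull c"
      using G(1) face_of_convex_hull_affine_independent[OF indep] by blast
    have "c \<subseteq> G"
      unfolding c(2) by (rule hull_subset)
    with c(1) G(2) have "G \<subseteq> convex hull (C \<inter> U)"
      unfolding c(2) by (intro hull_mono) blast
    then show "G face_of convex hull (C \<inter> U)"
      using face_of_subset[OF G(1) _ face_of_imp_subset[OF hull_face]] by blast
  next
    assume G: "G face_of convex hull (C \<inter> U)"
    have "convex hull (C \<inter> U) \<subseteq> U"
      using \<open>convex U\<close> by (intro hull_minimal) auto
    then show "G face_of convex hull C \<and> G \<subseteq> U"
      using face_of_trans[OF G hull_face] face_of_imp_subset[OF G] by blast
  qed
qed

lemma simplex_meet_complex_restrict_convex:
  assumes K: "lin_simplicial_complex K" and "convex U" and D: "D \<in> K"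
  shows "\<exists>F. F face_of D \<and> simplex_meet D (complex_restrict K U) = {G. simplex_face G F}"
proof -
  obtain k where "k simplex D"
    using K D unfolding lin_simplicial_complex_def is_simplex_def by blast
  then obtain C where C: "\<not> affine_dependent C" "D = convex hull C"
    unfolding simplex_def by blast
  have F: "convex hull (C \<inter> U) face_of D"
    using C face_of_convex_hull_affine_independent by blast
  have "simplex_meet D (complex_restrict K U) = {G. simplex_face G D \<and> G \<subseteq> U}"
    using K D by (rule simplex_meet_complex_restrict)
  also have "\<dots> = {G. simplex_face G (convex hull (C \<inter> U))}"
    using face_of_simplex_subset_convex_iff[OF C(1) \<open>convex U\<close>]
    unfolding C(2) simplex_face_def by blast
  finally show ?thesis
    using F by blast
qed

theorem lemma3p11:
  fixes K :: "(real^'n) set set" and U :: "(real^'n) set"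
  assumes "lin_simplicial_complex K" and "convex U"
  shows "subcomplex (complex_restrict K U) K \<and> nice K (complex_restrict K U)"
  unfolding nice_def
  using subcomplex_complex_restrict[OF assms(1)] complex_star_subset[OF assms(1)]
    simplex_meet_complex_restrict_convex[OF assms]
  by (meson subsetD)

end
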